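(* Let $(\mathcal{V},g)$ be a finite-dimensional real scalar product space, let $J_1,\dots,J_m$ be skew-adjoint endomorphisms of $\mathcal{V}$ with $J_iJ_j+J_jJ_i=2c_i\delta_{ij}\,\mathrm{id}$ for $1\le i,j\le m$, where $c_i\in\{-1,1\}$, and let $\mu_0,\dots,\mu_m\in\mathbb{R}$. If $(3c_i\mu_i+\mu_0)\mu_i>0$ for all $1\le i\le m$, or $(3c_i\mu_i+\mu_0)\mu_i<0$ for all $1\le i\le m$, then the (semi-Clifford) algebraic curvature tensor $R=\mu_0R^0+\sum_{i=1}^m\mu_iR^{J_i}$ is totally Jacobi-dual.
   Context: A scalar product space is a finite-dimensional real vector space with a nondegenerate symmetric bilinear form $g$; $\varepsilon_X=g(X,X)$. $R^0(X,Y,Z,W)=g(Y,Z)g(X,W)-g(X,Z)g(Y,W)$; for skew-adjoint $J$, $R^J(X,Y,Z,W)=g(JX,Z)g(JY,W)-g(JY,Z)g(JX,W)+2g(JX,Y)g(JZ,W)$. The Jacobi operator is $\mathcal{J}_X(Y)=\sum_{i}\varepsilon_{E_i}R(Y,X,X,E_i)E_i$ for an orthonormal basis $(E_i)$. An eigenvector of $\mathcal{J}_X$ is a nonzero $Y$ with $\mathcal{J}_X(Y)=\lambda Y$, $\lambda\in\mathbb{R}$. $R$ is totally Jacobi-dual if for all $X,Y\in\mathcal{V}$ with $X\neq0$: whenever $Y$ is an eigenvector of $\mathcal{J}_X$, then $X$ is an eigenvector of $\mathcal{J}_Y$. *)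

theory Defs
  imports "HOL-Analysis.Analysis"
begin

text \<open>A scalar product space: the finite-dimensional real vector space is the
type 'a (class euclidean_space; its own inner product is NOT used), and g is a
nondegenerate symmetric bilinear form on it.\<close>

definition scalar_product :: "('a::euclidean_space \<Rightarrow> 'a \<Rightarrow> real) \<Rightarrow> bool" where
  "scalar_product g \<longleftrightarrow> bilinear g \<and> (\<forall>x y. g x y = g y x)
      \<and> (\<forall>x. (\<forall>y. g x y = 0) \<longrightarrow> x = 0)"

definition skew_adjoint :: "('a::euclidean_space \<Rightarrow> 'a \<Rightarrow> real) \<Rightarrow> ('a \<Rightarrow> 'a) \<Rightarrow> bool" where
  "skew_adjoint g J \<longleftrightarrow> linear J \<and> (\<forall>x y. g (J x) y = - g x (J y))"

definition g_orthonormal_basis :: "('a::euclidean_space \<Rightarrow> 'a \<Rightarrow> real) \<Rightarrow> 'a set \<Rightarrow> bool" where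
  "g_orthonormal_basis g B \<longleftrightarrow> finite B \<and> independent B \<and> span B = UNIV
      \<and> (\<forall>e\<in>B. g e e = 1 \<or> g e e = -1)
      \<and> (\<forall>e\<in>B. \<forall>f\<in>B. e \<noteq> f \<longrightarrow> g e f = 0)"

definition R0 :: "('a::euclidean_space \<Rightarrow> 'a \<Rightarrow> real) \<Rightarrow> 'a \<Rightarrow> 'a \<Rightarrow> 'a \<Rightarrow> 'a \<Rightarrow> real" where
  "R0 g X Y Z W = g Y Z * g X W - g X Z * g Y W"

definition RJ :: "('a::euclidean_space \<Rightarrow> 'a \<Rightarrow> real) \<Rightarrow> ('a \<Rightarrow> 'a) \<Rightarrow> 'a \<Rightarrow> 'a \<Rightarrow> 'a \<Rightarrow> 'a \<Rightarrow> real" where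
  "RJ g J X Y Z W = g (J X) Z * g (J Y) W - g (J Y) Z * g (J X) W + 2 * g (J X) Y * g (J Z) W"

definition jacobi_op :: "('a::euclidean_space \<Rightarrow> 'a \<Rightarrow> real) \<Rightarrow> ('a \<Rightarrow> 'a \<Rightarrow> 'a \<Rightarrow> 'a \<Rightarrow> real)
    \<Rightarrow> 'a \<Rightarrow> 'a \<Rightarrow> 'a" where
  "jacobi_op g R X Y = (let B = (SOME B. g_orthonormal_basis g B) in
      (\<Sum>e\<in>B. (g e e * R Y X X e) *\<^sub>R e))"

definition is_eigenvector :: "('a::real_vector \<Rightarrow> 'a) \<Rightarrow> 'a \<Rightarrow> bool" where
  "is_eigenvector f Y \<longleftrightarrow> Y \<noteq> 0 \<and> (\<exists>l::real. f Y = l *\<^sub>R Y)"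

definition totally_jacobi_dual :: "('a::euclidean_space \<Rightarrow> 'a \<Rightarrow> real) \<Rightarrow> ('a \<Rightarrow> 'a \<Rightarrow> 'a \<Rightarrow> 'a \<Rightarrow> real) \<Rightarrow> bool" where
  "totally_jacobi_dual g R \<longleftrightarrow> (\<forall>X Y. X \<noteq> 0 \<longrightarrow>
      is_eigenvector (jacobi_op g R X) Y \<longrightarrow> is_eigenvector (jacobi_op g R Y) X)"

end

theory Submission
  imports Defs
begin

(* A g-orthonormal basis exists (extend a maximal orthonormal set), and expanding in it
   shows that J_X Y is the vector representing R(Y,X,X,-). For the semi-Clifford tensor,
   with Z = sum_i mu_i g(J_i Y, X) J_i,
     J_X Y = mu_0 (g(X,X) Y - g(X,Y) X) + 3 Z X,   J_Y X = mu_0 (g(Y,Y) X - g(X,Y) Y) - 3 Z Y,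
   and the Clifford relations give Z^2 = s id with s = sum_i (mu_i g(J_i Y, X))^2 c_i.
   If J_X Y = l Y then k Y = mu_0 g(X,Y) X - 3 Z X with k = mu_0 g(X,X) - l.
   For k <> 0, applying Z shows that mu_0 g(X,Y) Y + 3 Z Y is a multiple of X.
   For k = 0, X is an eigenvector of Z; comparing Z^2 = s with the pairing of Z X against Y
   yields sum_i g(J_i Y, X)^2 (3 c_i mu_i + mu_0) mu_i = 0, so the sign hypothesis forces
   Z = 0, and J_Y X is again a multiple of X. *)

locale scalar_product_space =
  fixes g :: "'a::euclidean_space \<Rightarrow> 'a \<Rightarrow> real"
  assumes scalar_product: "scalar_product g"
begin

lemma bilinear: "bilinear g"
  using scalar_product by (simp add: scalar_product_def)

lemma sym: "g x y = g y x"
  using scalar_product by (simp add: scalar_product_def)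

lemma nondegenerate: "(\<And>y. g x y = 0) \<Longrightarrow> x = 0"
  using scalar_product by (simp add: scalar_product_def)

lemmas bilinear_simps =
  bilinear_ladd[OF bilinear] bilinear_radd[OF bilinear]
  bilinear_lsub[OF bilinear] bilinear_rsub[OF bilinear]
  bilinear_lmul[OF bilinear] bilinear_rmul[OF bilinear]

lemma sum_left: "g (sum f S) y = (\<Sum>i\<in>S. g (f i) y)"
  using linear_sum[of "\<lambda>x. g x y"] bilinear by (simp add: bilinear_def)

lemma sum_right: "g x (sum f S) = (\<Sum>i\<in>S. g x (f i))"
  using linear_sum[of "g x"] bilinear by (simp add: bilinear_def)

definition orthonormal :: "'a set \<Rightarrow> bool" where
  "orthonormal B \<longleftrightarrow> (\<forall>e\<in>B. g e e = 1 \<or> g e e = -1) \<and> (\<forall>e\<in>B. \<forall>f\<in>B. e \<noteq> f \<longrightarrow> g e f = 0)"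

definition orthonormal_expansion :: "'a set \<Rightarrow> 'a \<Rightarrow> 'a" where
  "orthonormal_expansion B x = (\<Sum>e\<in>B. (g e e * g x e) *\<^sub>R e)"

lemma g_orthonormal_basis_iff:
  "g_orthonormal_basis g B \<longleftrightarrow> finite B \<and> independent B \<and> span B = UNIV \<and> orthonormal B"
  by (auto simp: g_orthonormal_basis_def orthonormal_def)

lemma orthonormal_independent:
  assumes "orthonormal B"
  shows "independent B"
  unfolding independent_explicit_finite_subsets
proof (intro allI impI ballI)
  fix S u v
  assume S: "S \<subseteq> B" "finite S" and combination: "(\<Sum>w\<in>S. u w *\<^sub>R w) = 0" and v: "v \<in> S"
  have "0 = g (\<Sum>w\<in>S. u w *\<^sub>R w) v"
    by (simp add: combination bilinear_lzero[OF bilinear])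
  also have "\<dots> = (\<Sum>w\<in>S. u w * g w v)"
    by (simp add: sum_left bilinear_simps)
  also have "\<dots> = u v * g v v"
    using assms S v by (subst sum.remove) (auto simp: orthonormal_def subset_iff intro!: sum.neutral)
  moreover have "g v v \<noteq> 0"
    using assms S v unfolding orthonormal_def by fastforce
  ultimately show "u v = 0"
    by simp
qed

lemma orthonormal_finite_card:
  "orthonormal B \<Longrightarrow> finite B \<and> card B \<le> DIM('a)"
  using orthonormal_independent independent_bound by blast

lemma g_orthonormal_expansion:
  assumes "orthonormal B" "finite B" "f \<in> B"
  shows "g (orthonormal_expansion B x) f = g x f"
proof -
  have "g (orthonormal_expansion B x) f = (\<Sum>e\<in>B. g e e * g x e * g e f)"
    by (simp add: orthonormal_expansion_def sum_left bilinear_simps)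
  also have "\<dots> = g f f * g x f * g f f"
    using assms by (subst sum.remove) (auto simp: orthonormal_def intro!: sum.neutral)
  also have "\<dots> = g x f"
    using assms by (auto simp: orthonormal_def)
  finally show ?thesis .
qed

lemma orthonormal_expansion_in_span: "orthonormal_expansion B x \<in> span B"
  unfolding orthonormal_expansion_def by (intro span_sum span_scale span_base)

text \<open>If every vector g-orthogonal to B were null, polarization would make the nonzero
  vector x - orthonormal_expansion B x (for x outside span B) g-orthogonal to everything.\<close>

lemma orthogonal_complement_non_null:
  assumes B: "orthonormal B" "finite B" and "span B \<noteq> UNIV"
  shows "\<exists>v. (\<forall>f\<in>B. g v f = 0) \<and> g v v \<noteq> 0"
proof (rule ccontr)
  assume "\<not> ?thesis"
  then have null: "g v v = 0" if "\<forall>f\<in>B. g v f = 0" for v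
    using that by blast
  define residual where "residual x = x - orthonormal_expansion B x" for x
  have residual_orthogonal: "\<forall>f\<in>B. g (residual x) f = 0" for x
    using B by (simp add: residual_def bilinear_simps g_orthonormal_expansion)
  obtain x where "x \<notin> span B"
    using assms(3) by auto
  then have "residual x \<noteq> 0"
    using orthonormal_expansion_in_span[of B x] by (auto simp: residual_def)
  moreover have "g (residual x) z = 0" for z
  proof -
    have "g (residual x + residual z) (residual x + residual z) = 0"
      using residual_orthogonal by (intro null) (simp add: bilinear_simps)
    then have "g (residual x) (residual z) = 0"
      using null[OF residual_orthogonal] by (simp add: bilinear_simps sym[of "residual z"])
    moreover have "g (residual x) (orthonormal_expansion B z) = 0"
      using residual_orthogonal
      by (simp add: orthonormal_expansion_def sum_right bilinear_simps)
    moreover have "z = residual z + orthonormal_expansion B z"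
      by (simp add: residual_def)
    ultimately show ?thesis
      by (metis add.right_neutral bilinear_simps(2))
  qed
  ultimately show False
    using nondegenerate by blast
qed

lemma orthonormal_extend:
  assumes "orthonormal B" "finite B" "span B \<noteq> UNIV"
  shows "\<exists>e. e \<notin> B \<and> orthonormal (insert e B)"
proof -
  obtain v where v_orth: "\<forall>f\<in>B. g v f = 0" and v_non_null: "g v v \<noteq> 0"
    using orthogonal_complement_non_null[OF assms] by blast
  define e where "e = (1 / sqrt \<bar>g v v\<bar>) *\<^sub>R v"
  have "g e e = g v v / \<bar>g v v\<bar>"
    by (simp add: e_def bilinear_simps)
  then have e_unit: "g e e = 1 \<or> g e e = -1"
    using v_non_null by (cases "g v v > 0") auto
  have e_orth: "\<forall>f\<in>B. g e f = 0"
    using v_orth by (simp add: e_def bilinear_simps)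
  show ?thesis
  proof (intro exI conjI)
    show "e \<notin> B"
      using e_orth e_unit by force
    show "orthonormal (insert e B)"
      using assms(1) e_unit e_orth sym by (auto simp: orthonormal_def)
  qed
qed

lemma orthonormal_basis_exists: "\<exists>B. g_orthonormal_basis g B"
proof -
  obtain B where B: "orthonormal B" and maximal: "\<And>B'. orthonormal B' \<Longrightarrow> card B' \<le> card B"
    using Nat.ex_has_greatest_nat[where P = "\<lambda>n. \<exists>B. orthonormal B \<and> card B = n" and k = 0 and b = "DIM('a)"]
      orthonormal_finite_card by (metis card.empty empty_iff orthonormal_def)
  have "span B = UNIV"
  proof (rule ccontr)
    assume "span B \<noteq> UNIV"
    then obtain e where "e \<notin> B" "orthonormal (insert e B)"
      using orthonormal_extend B orthonormal_finite_card by blast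
    then show False
      using maximal[of "insert e B"] orthonormal_finite_card[OF B] by simp
  qed
  then show ?thesis
    using B orthonormal_finite_card orthonormal_independent by (auto simp: g_orthonormal_basis_iff)
qed

lemma orthonormal_basis_expansion:
  assumes "g_orthonormal_basis g B"
  shows "orthonormal_expansion B x = x"
proof -
  define d where "d = x - orthonormal_expansion B x"
  have "linear (g d)"
    using bilinear by (simp add: bilinear_def)
  moreover have "g d f = 0" if "f \<in> B" for f
    using assms that by (simp add: d_def bilinear_simps g_orthonormal_expansion g_orthonormal_basis_iff)
  ultimately have "g d y = 0" for y
    using assms linear_eq_0_on_span[of "g d" B y] by (auto simp: g_orthonormal_basis_iff)
  then have "d = 0"
    by (rule nondegenerate)
  then show ?thesis
    by (simp add: d_def)
qed

lemma jacobi_op_eqI: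
  assumes "\<And>W. R Y X X W = g V W"
  shows "jacobi_op g R X Y = V"
  using someI_ex[OF orthonormal_basis_exists] orthonormal_basis_expansion
  by (simp add: jacobi_op_def assms orthonormal_expansion_def)

end

lemma sum_weighted_squares_eq_0:
  fixes b w :: "'i \<Rightarrow> real"
  assumes "finite A" and "(\<forall>j\<in>A. w j > 0) \<or> (\<forall>j\<in>A. w j < 0)"
    and "(\<Sum>j\<in>A. b j * b j * w j) = 0" and "i \<in> A"
  shows "b i = 0"
proof -
  have "b i = 0" if "\<forall>j\<in>A. w' j > 0" "(\<Sum>j\<in>A. b j * b j * w' j) = 0" for w'
  proof -
    have "\<forall>j\<in>A. b j * b j * w' j = 0"
      using that assms(1) by (subst sum_nonneg_eq_0_iff[symmetric]) (auto intro: less_imp_le)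
    then show ?thesis
      using that(1) assms(4) by fastforce
  qed
  from this[of w] this[of "\<lambda>j. - w j"] show ?thesis
    using assms(2,3) by (auto simp: sum_negf)
qed

lemma linear_square_scalar_eigenvalue:
  fixes Z :: "'a::real_vector \<Rightarrow> 'a"
  assumes "linear Z" "\<And>v. Z (Z v) = s *\<^sub>R v" "Z x = a *\<^sub>R x" "x \<noteq> 0"
  shows "a * a = s"
proof -
  have "(a * a) *\<^sub>R x = s *\<^sub>R x"
    using assms(1-3) by (metis linear_scale scaleR_scaleR)
  then show ?thesis
    using assms(4) by simp
qed

text \<open>Multiply by k and substitute the relation and its image under Z: the Z x terms cancel.\<close>

lemma linear_square_scalar_swap:
  fixes Z :: "'a::real_vector \<Rightarrow> 'a"
  assumes "linear Z" "\<And>v. Z (Z v) = s *\<^sub>R v" "k \<noteq> 0"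
    and "k *\<^sub>R y = a *\<^sub>R x - t *\<^sub>R Z x"
  shows "a *\<^sub>R y + t *\<^sub>R Z y = ((a * a - t * t * s) / k) *\<^sub>R x"
proof -
  have Z_relation: "k *\<^sub>R Z y = a *\<^sub>R Z x - (t * s) *\<^sub>R x"
    using assms(1,2,4) by (metis linear_diff linear_scale scaleR_scaleR)
  have "k *\<^sub>R (a *\<^sub>R y + t *\<^sub>R Z y) = a *\<^sub>R (k *\<^sub>R y) + t *\<^sub>R (k *\<^sub>R Z y)"
    by (simp add: algebra_simps)
  also have "\<dots> = (a * a - t * t * s) *\<^sub>R x"
    unfolding assms(4) Z_relation by (simp add: algebra_simps)
  finally have "a *\<^sub>R y + t *\<^sub>R Z y = inverse k *\<^sub>R ((a * a - t * t * s) *\<^sub>R x)"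
    by (metis assms(3) left_inverse scaleR_one scaleR_scaleR)
  then show ?thesis
    by (simp add: divide_inverse mult.commute)
qed

locale semi_clifford = scalar_product_space g for g :: "'a::euclidean_space \<Rightarrow> 'a \<Rightarrow> real" +
  fixes J :: "nat \<Rightarrow> 'a \<Rightarrow> 'a" and c :: "nat \<Rightarrow> real" and m :: nat
  assumes skew_adjoint_J: "i \<in> {1..m} \<Longrightarrow> skew_adjoint g (J i)"
    and anticommute_J: "i \<in> {1..m} \<Longrightarrow> j \<in> {1..m} \<Longrightarrow>
      J i (J j x) + J j (J i x) = (if i = j then 2 * c i else 0) *\<^sub>R x"
begin

lemma linear_J: "i \<in> {1..m} \<Longrightarrow> linear (J i)"
  using skew_adjoint_J by (simp add: skew_adjoint_def)

lemma g_J_left: "i \<in> {1..m} \<Longrightarrow> g (J i x) y = - g x (J i y)"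
  using skew_adjoint_J by (simp add: skew_adjoint_def)

lemma g_J_self: "i \<in> {1..m} \<Longrightarrow> g (J i x) x = 0"
  using g_J_left[of i x x] sym[of x] by simp

definition J_comb :: "(nat \<Rightarrow> real) \<Rightarrow> 'a \<Rightarrow> 'a" where
  "J_comb p v = (\<Sum>i=1..m. p i *\<^sub>R J i v)"

lemma linear_J_comb: "linear (J_comb p)"
  unfolding J_comb_def
  by (intro linear_compose_sum ballI linear_compose_scale_right linear_J)

lemma g_J_comb_left: "g (J_comb p x) y = (\<Sum>i=1..m. p i * g (J i x) y)"
  by (simp add: J_comb_def sum_left bilinear_simps)

lemma J_comb_square: "J_comb p (J_comb p v) = (\<Sum>i=1..m. p i * p i * c i) *\<^sub>R v"
proof -
  define T where "T = (\<Sum>i=1..m. \<Sum>j=1..m. (p i * p j) *\<^sub>R J i (J j v))"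
  have expand: "J_comb p (J_comb p v) = T"
    unfolding T_def J_comb_def
    by (intro sum.cong refl)
      (simp add: linear_sum[OF linear_J] linear_scale[OF linear_J] scaleR_sum_right)
  have T_swap: "T = (\<Sum>i=1..m. \<Sum>j=1..m. (p i * p j) *\<^sub>R J j (J i v))"
    unfolding T_def by (subst sum.swap) (simp add: mult.commute)
  have "T + T = (\<Sum>i=1..m. \<Sum>j=1..m. (p i * p j) *\<^sub>R (J i (J j v) + J j (J i v)))"
    by (subst (2) T_swap) (simp add: T_def sum.distrib[symmetric] scaleR_right_distrib)
  also have "\<dots> = (\<Sum>i=1..m. \<Sum>j=1..m. if i = j then (2 * p i * p i * c i) *\<^sub>R v else 0)"
    by (intro sum.cong refl) (simp add: anticommute_J)
  also have "\<dots> = (\<Sum>i=1..m. (2 * p i * p i * c i) *\<^sub>R v)"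
    by (simp add: sum.delta)
  also have "\<dots> = (2::real) *\<^sub>R ((\<Sum>i=1..m. p i * p i * c i) *\<^sub>R v)"
    by (simp add: scaleR_sum_left sum_distrib_left scaleR_sum_right algebra_simps)
  finally show ?thesis
    unfolding expand
    by (metis scaleR_2 scaleR_cancel_left zero_neq_numeral)
qed

definition curvature :: "(nat \<Rightarrow> real) \<Rightarrow> 'a \<Rightarrow> 'a \<Rightarrow> 'a \<Rightarrow> 'a \<Rightarrow> real" where
  "curvature \<mu> = (\<lambda>X Y Z W. \<mu> 0 * R0 g X Y Z W + (\<Sum>i=1..m. \<mu> i * RJ g (J i) X Y Z W))"

lemma jacobi_op_curvature:
  "jacobi_op g (curvature \<mu>) X Y
     = \<mu> 0 *\<^sub>R (g X X *\<^sub>R Y - g X Y *\<^sub>R X) + 3 *\<^sub>R J_comb (\<lambda>i. \<mu> i * g (J i Y) X) X"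
proof (rule jacobi_op_eqI)
  fix W
  have "(\<Sum>i=1..m. \<mu> i * RJ g (J i) Y X X W) = 3 * (\<Sum>i=1..m. \<mu> i * g (J i Y) X * g (J i X) W)"
    unfolding sum_distrib_left by (intro sum.cong refl) (simp add: RJ_def g_J_self)
  then have "curvature \<mu> Y X X W
      = \<mu> 0 * (g X X * g Y W - g X Y * g X W) + 3 * (\<Sum>i=1..m. \<mu> i * g (J i Y) X * g (J i X) W)"
    by (simp add: curvature_def R0_def sym[of Y X])
  also have "\<dots> = g (\<mu> 0 *\<^sub>R (g X X *\<^sub>R Y - g X Y *\<^sub>R X) + 3 *\<^sub>R J_comb (\<lambda>i. \<mu> i * g (J i Y) X) X) W"
    by (simp add: bilinear_simps g_J_comb_left)
  finally show "curvature \<mu> Y X X W = g (\<mu> 0 *\<^sub>R (g X X *\<^sub>R Y - g X Y *\<^sub>R X)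
      + 3 *\<^sub>R J_comb (\<lambda>i. \<mu> i * g (J i Y) X) X) W" .
qed

lemma jacobi_op_curvature_swap:
  "jacobi_op g (curvature \<mu>) Y X
     = \<mu> 0 *\<^sub>R (g Y Y *\<^sub>R X - g X Y *\<^sub>R Y) - 3 *\<^sub>R J_comb (\<lambda>i. \<mu> i * g (J i Y) X) Y"
proof -
  have "J_comb (\<lambda>i. \<mu> i * g (J i X) Y) Y = - J_comb (\<lambda>i. \<mu> i * g (J i Y) X) Y"
    unfolding J_comb_def sum_negf[symmetric]
    by (intro sum.cong refl) (simp add: g_J_left sym[of X])
  then show ?thesis
    using jacobi_op_curvature[of \<mu> Y X] by (simp add: sym[of Y X])
qed

lemma J_comb_eigen_coefficients_vanish:
  assumes sign: "(\<forall>i\<in>{1..m}. (3 * c i * \<mu> i + \<mu> 0) * \<mu> i > 0)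
      \<or> (\<forall>i\<in>{1..m}. (3 * c i * \<mu> i + \<mu> 0) * \<mu> i < 0)"
    and "X \<noteq> 0" and eigen: "3 *\<^sub>R J_comb (\<lambda>i. \<mu> i * g (J i Y) X) X = (\<mu> 0 * g X Y) *\<^sub>R X"
    and "i \<in> {1..m}"
  shows "g (J i Y) X = 0"
proof -
  define b where "b i = g (J i Y) X" for i
  define a where "a = \<mu> 0 * g X Y"
  define s where "s = (\<Sum>i=1..m. \<mu> i * b i * (\<mu> i * b i) * c i)"
  have "J_comb (\<lambda>i. \<mu> i * b i) X = (1 / 3) *\<^sub>R (3 *\<^sub>R J_comb (\<lambda>i. \<mu> i * b i) X)"
    by simp
  also have "\<dots> = (a / 3) *\<^sub>R X"
    using eigen by (simp add: a_def b_def)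
  finally have "J_comb (\<lambda>i. \<mu> i * b i) X = (a / 3) *\<^sub>R X" .
  from linear_square_scalar_eigenvalue[OF linear_J_comb J_comb_square this \<open>X \<noteq> 0\<close>]
  have squares: "a * a = 9 * s"
    by (simp add: s_def field_simps)
  have "g (J_comb (\<lambda>i. \<mu> i * b i) X) Y = - (\<Sum>i=1..m. \<mu> i * b i * b i)"
    unfolding g_J_comb_left sum_negf[symmetric]
    by (intro sum.cong refl) (simp add: g_J_left b_def sym[of X])
  then have pairing: "a * g X Y = - 3 * (\<Sum>i=1..m. \<mu> i * b i * b i)"
    using arg_cong[OF eigen, of "\<lambda>v. g v Y"] by (simp add: bilinear_simps a_def b_def)
  have "(\<Sum>i=1..m. b i * b i * ((3 * c i * \<mu> i + \<mu> 0) * \<mu> i))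
      = 3 * s + \<mu> 0 * (\<Sum>i=1..m. \<mu> i * b i * b i)"
    by (simp add: s_def sum_distrib_left sum.distrib[symmetric] algebra_simps)
  also have "\<dots> = 0"
    using squares pairing unfolding a_def by algebra
  finally show ?thesis
    using sum_weighted_squares_eq_0[OF _ sign _ \<open>i \<in> {1..m}\<close>] by (simp add: b_def)
qed

theorem totally_jacobi_dual_curvature:
  assumes sign: "(\<forall>i\<in>{1..m}. (3 * c i * \<mu> i + \<mu> 0) * \<mu> i > 0)
      \<or> (\<forall>i\<in>{1..m}. (3 * c i * \<mu> i + \<mu> 0) * \<mu> i < 0)"
  shows "totally_jacobi_dual g (curvature \<mu>)"
  unfolding totally_jacobi_dual_def is_eigenvector_def
proof (intro allI impI conjI)
  fix X Y
  assume "X \<noteq> 0" and "Y \<noteq> 0 \<and> (\<exists>l. jacobi_op g (curvature \<mu>) X Y = l *\<^sub>R Y)"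
  then obtain l where eigen: "jacobi_op g (curvature \<mu>) X Y = l *\<^sub>R Y"
    by blast
  show "X \<noteq> 0" by fact
  define p where "p i = \<mu> i * g (J i Y) X" for i
  define k where "k = \<mu> 0 * g X X - l"
  have relation: "k *\<^sub>R Y = (\<mu> 0 * g X Y) *\<^sub>R X - 3 *\<^sub>R J_comb p X"
    using eigen unfolding jacobi_op_curvature p_def k_def by (simp add: algebra_simps)
  show "\<exists>l'. jacobi_op g (curvature \<mu>) Y X = l' *\<^sub>R X"
  proof (cases "k = 0")
    case False
    obtain r where "(\<mu> 0 * g X Y) *\<^sub>R Y + 3 *\<^sub>R J_comb p Y = r *\<^sub>R X"
      using linear_square_scalar_swap[OF linear_J_comb J_comb_square False relation] by blast
    then have "jacobi_op g (curvature \<mu>) Y X = (\<mu> 0 * g Y Y - r) *\<^sub>R X"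
      unfolding jacobi_op_curvature_swap p_def[symmetric] by (simp add: algebra_simps)
    then show ?thesis ..
  next
    case True
    then have Z_eigen: "3 *\<^sub>R J_comb p X = (\<mu> 0 * g X Y) *\<^sub>R X"
      using relation by simp
    then have "g (J i Y) X = 0" if "i \<in> {1..m}" for i
      using J_comb_eigen_coefficients_vanish[OF sign \<open>X \<noteq> 0\<close> _ that] unfolding p_def by blast
    then have "J_comb p = (\<lambda>v. 0)"
      by (simp add: J_comb_def p_def fun_eq_iff)
    then have "\<mu> 0 * g X Y = 0"
      using Z_eigen \<open>X \<noteq> 0\<close> by simp
    then have "jacobi_op g (curvature \<mu>) Y X = (\<mu> 0 * g Y Y) *\<^sub>R X"
      unfolding jacobi_op_curvature_swap p_def[symmetric] \<open>J_comb p = _\<close> by (auto simp: algebra_simps)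
    then show ?thesis ..
  qed
qed

end


theorem mainTheorem6:
  fixes g :: "'a::euclidean_space \<Rightarrow> 'a \<Rightarrow> real"
    and J :: "nat \<Rightarrow> 'a \<Rightarrow> 'a"
    and c :: "nat \<Rightarrow> real"
    and \<mu> :: "nat \<Rightarrow> real"
    and m :: nat
  assumes "scalar_product g"
    and "\<forall>i\<in>{1..m}. skew_adjoint g (J i)"
    and "\<forall>i\<in>{1..m}. c i = 1 \<or> c i = -1"
    and "\<forall>i\<in>{1..m}. \<forall>j\<in>{1..m}. \<forall>x.
           J i (J j x) + J j (J i x) = (if i = j then 2 * c i else 0) *\<^sub>R x"
    and "(\<forall>i\<in>{1..m}. (3 * c i * \<mu> i + \<mu> 0) * \<mu> i > 0)
       \<or> (\<forall>i\<in>{1..m}. (3 * c i * \<mu> i + \<mu> 0) * \<mu> i < 0)"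
  shows "totally_jacobi_dual g
           (\<lambda>X Y Z W. \<mu> 0 * R0 g X Y Z W + (\<Sum>i=1..m. \<mu> i * RJ g (J i) X Y Z W))"
proof -
  interpret semi_clifford g J c m
    using assms(1,2,4) by unfold_locales auto
  show ?thesis
    using totally_jacobi_dual_curvature[OF assms(5)] by (simp only: curvature_def)
qed

end
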